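(* There exist absolute constants $c>0$ and $k_0$ such that for every $k\ge k_0$ and every $f(x,y)\in\mathbb{C}[x,y]$ whose Newton polytope has exactly $k$ vertices, there exists $a\in\mathbb{C}\setminus\{0\}$ such that the real univariate polynomial $\Re(f(x,a))$ has at least $ck$ distinct real roots.
   Context: $\mathrm{Newt}(f)$ is the convex hull of $\{(i,j):a_{i,j}\ne0\}$ for $f=\sum a_{i,j}x^iy^j$. For a univariate complex polynomial $g(x)=\sum_ia_ix^i$, $\Re(g):=\sum_i\Re(a_i)x^i\in\mathbb{R}[x]$. *)

theory Defs
  imports "HOL-Analysis.Analysis" "HOL-Computational_Algebra.Polynomial"
begin

text \<open>A bivariate complex polynomial f = sum a_(i,j) x^i y^j is represented by its
  coefficient function (i,j) \<mapsto> a_(i,j), with finite support.\<close>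

definition bsupp :: "(nat \<times> nat \<Rightarrow> complex) \<Rightarrow> (nat \<times> nat) set" where
  "bsupp f = {p. f p \<noteq> 0}"

definition newton_polytope :: "(nat \<times> nat \<Rightarrow> complex) \<Rightarrow> (real \<times> real) set" where
  "newton_polytope f = convex hull ((\<lambda>(i,j). (real i, real j)) ` bsupp f)"

definition newton_vertices :: "(nat \<times> nat \<Rightarrow> complex) \<Rightarrow> (real \<times> real) set" where
  "newton_vertices f = {v. v extreme_point_of newton_polytope f}"

definition specialize_y :: "(nat \<times> nat \<Rightarrow> complex) \<Rightarrow> complex \<Rightarrow> complex poly" where
  "specialize_y f a = (\<Sum>(i,j)\<in>bsupp f. monom (f (i,j) * a ^ j) i)"

definition re_poly :: "complex poly \<Rightarrow> real poly" where
  "re_poly g = map_poly Re g"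

end

theory Submission
  imports Defs
begin

text \<open>Every vertex of the Newton polygon is the unique maximiser on the support of a weight
  \<open>\<epsilon> j + s i\<close> with \<open>\<epsilon> = \<plusminus>1\<close>, and for one of the two signs this holds for at least half of
  the vertices. Ordered by \<open>x\<close>-degree, these exponents have increasing slopes \<open>s\<close>, and at
  \<open>x = T\<^sup>s\<close>, \<open>y = T\<^sup>\<epsilon> \<omega>\<close> the corresponding monomial dominates \<open>Re f(x, y)\<close> for large \<open>T\<close>.
  A second-moment computation for products of cosines gives a root of unity \<open>\<omega>\<close> for which
  consecutive dominant terms have real parts of opposite signs for an eighth of the pairs, and
  the intermediate value theorem yields \<open>(k/2 - 6)/8 \<ge> k/32\<close> real roots when \<open>k \<ge> 24\<close>.\<close>

lemma sum_cos_roots_of_unity: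
  fixes N :: nat and k :: int and c :: real
  assumes "N > 0" and "\<not> int N dvd k"
  shows "(\<Sum>r<N. cos (c + real_of_int k * (2 * pi * real r / N))) = 0"
proof -
  define z where "z = cis (2 * pi * real_of_int k / N)"
  have "z \<noteq> 1"
  proof
    assume "z = 1"
    then have "exp (\<i> * complex_of_real (2 * pi * real_of_int k / N)) = 1"
      by (simp add: z_def cis_conv_exp)
    then obtain n :: int where "2 * pi * real_of_int k / N = of_int (2 * n) * pi"
      by (auto simp: exp_eq_1)
    then have "real_of_int k = real_of_int n * N"
      using \<open>N > 0\<close> by (simp add: field_simps)
    then have "k = n * int N"
      by (metis of_int_eq_iff of_int_mult of_int_of_nat_eq)
    with assms(2) show False by simp
  qed
  moreover have "z ^ N = 1"
    using \<open>N > 0\<close> cis_multiple_2pi[of "real_of_int k"] by (simp add: z_def Complex.DeMoivre)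
  ultimately have "(\<Sum>r<N. z ^ r) = 0"
    using geometric_sum[of z N] by simp
  then have "Re (\<Sum>r<N. cis c * z ^ r) = 0"
    by (simp add: sum_distrib_left[symmetric])
  moreover have "Re (cis c * z ^ r) = cos (c + real_of_int k * (2 * pi * real r / N))" for r
    by (simp add: z_def Complex.DeMoivre cis_mult algebra_simps)
  ultimately show ?thesis by simp
qed

lemma card_neg_ge_sum_squares:
  fixes g :: "'a \<Rightarrow> real"
  assumes "finite A" and "\<And>x. x \<in> A \<Longrightarrow> \<bar>g x\<bar> \<le> 1" and "sum g A = 0"
  shows "(\<Sum>x\<in>A. (g x)\<^sup>2) \<le> 2 * real (card {x\<in>A. g x < 0})"
proof -
  have "(g x)\<^sup>2 \<le> g x + 2 * (if g x < 0 then 1 else 0)" if "x \<in> A" for x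
  proof -
    have "\<bar>g x\<bar> * \<bar>g x\<bar> \<le> \<bar>g x\<bar>"
      using assms(2)[OF that] by (simp add: mult_left_le del: abs_mult_self_eq)
    then show ?thesis using assms(2)[OF that]
      by (auto simp: abs_if power2_eq_square simp del: abs_mult_self_eq)
  qed
  then have "(\<Sum>x\<in>A. (g x)\<^sup>2) \<le> (\<Sum>x\<in>A. g x + 2 * (if g x < 0 then 1 else 0))"
    by (rule sum_mono)
  also have "\<dots> = sum g A + 2 * (\<Sum>x\<in>A. if g x < 0 then 1 else 0)"
    by (simp add: sum.distrib sum_distrib_left)
  also have "(\<Sum>x\<in>A. if g x < 0 then 1 else 0) = real (card {x\<in>A. g x < 0})"
    using assms(1) by (simp add: sum.If_cases Int_def conj_commute)
  finally show ?thesis using assms(3) by simp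
qed

text \<open>Over the \<open>N\<close>-th roots of unity the product has mean \<open>0\<close> and mean square \<open>1/4\<close>, since
  \<open>2(m + n) < N\<close> lets all nonzero frequencies cancel.\<close>

lemma card_cos_product_neg_ge:
  fixes N m n :: nat and \<alpha> \<beta> :: real
  assumes "1 \<le> m" and "1 \<le> n" and "m \<noteq> n" and "2 * (m + n) < N"
  shows "real N \<le> 8 * real (card {r\<in>{..<N}.
    cos (\<alpha> + m * (2 * pi * r / N)) * cos (\<beta> + n * (2 * pi * r / N)) < 0})"
proof -
  define \<theta> where "\<theta> r = 2 * pi * real r / N" for r :: nat
  define g where "g r = cos (\<alpha> + m * \<theta> r) * cos (\<beta> + n * \<theta> r)" for r
  have sum_zero: "(\<Sum>r<N. cos (c + real_of_int k * \<theta> r)) = 0" if "k \<noteq> 0" "\<bar>k\<bar> < int N" for k c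
  proof -
    have "\<not> int N dvd k" using that dvd_imp_le_int[of k "int N"] by auto
    then show ?thesis using sum_cos_roots_of_unity[of N k c] that by (simp add: \<theta>_def)
  qed
  have g: "g r = (cos ((\<alpha> - \<beta>) + real_of_int (int m - int n) * \<theta> r)
      + cos ((\<alpha> + \<beta>) + real_of_int (int m + int n) * \<theta> r)) / 2" for r
    unfolding g_def cos_times_cos by (simp add: algebra_simps)
  have g_sq: "(g r)\<^sup>2 = 1/4 + cos (2 * \<alpha> + real_of_int (2 * int m) * \<theta> r) / 4
      + cos (2 * \<beta> + real_of_int (2 * int n) * \<theta> r) / 4
      + cos ((2 * \<alpha> - 2 * \<beta>) + real_of_int (2 * int m - 2 * int n) * \<theta> r) / 8
      + cos ((2 * \<alpha> + 2 * \<beta>) + real_of_int (2 * int m + 2 * int n) * \<theta> r) / 8" for r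
  proof -
    have "(g r)\<^sup>2 = (1 + cos (2 * (\<alpha> + m * \<theta> r))) * (1 + cos (2 * (\<beta> + n * \<theta> r))) / 4"
      unfolding cos_double_cos by (simp add: g_def power_mult_distrib)
    then show ?thesis
      by (simp add: cos_times_cos algebra_simps add_divide_distrib)
  qed
  have "(\<Sum>r<N. g r) = 0"
    unfolding g sum_divide_distrib[symmetric] sum.distrib
    using sum_zero[of "int m - int n"] sum_zero[of "int m + int n"] assms by simp
  moreover have "(\<Sum>r<N. (g r)\<^sup>2) = real N / 4"
    unfolding g_sq sum.distrib sum_divide_distrib[symmetric]
    using sum_zero[of "2 * int m"] sum_zero[of "2 * int n"] sum_zero[of "2 * int m - 2 * int n"]
      sum_zero[of "2 * int m + 2 * int n"] assms by simp
  moreover have "\<bar>g r\<bar> \<le> 1" for r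
    unfolding g_def abs_mult by (intro mult_le_one) auto
  ultimately have "real N / 4 \<le> 2 * real (card {r\<in>{..<N}. g r < 0})"
    using card_neg_ge_sum_squares[of "{..<N}" g] by simp
  then show ?thesis by (simp add: g_def \<theta>_def)
qed

lemma Re_mult_cis_power: "Re (a * cis x ^ m) = cmod a * cos (Arg a + real m * x)"
proof -
  have "a * cis x ^ m = rcis (cmod a) (Arg a + real m * x)"
    by (subst (1) rcis_cmod_Arg[symmetric])
      (simp add: rcis_def Complex.DeMoivre cis_mult mult.assoc)
  then show ?thesis by simp
qed

lemma card_Re_product_neg_ge:
  fixes N m n :: nat and a b :: complex
  assumes "1 \<le> m" and "1 \<le> n" and "m \<noteq> n" and "2 * (m + n) < N" and "a \<noteq> 0" and "b \<noteq> 0"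
  shows "real N \<le> 8 * real (card {r\<in>{..<N}.
    Re (a * cis (2 * pi * r / N) ^ m) * Re (b * cis (2 * pi * r / N) ^ n) < 0})"
proof -
  have "Re (a * cis x ^ m) * Re (b * cis x ^ n) < 0 \<longleftrightarrow> cos (Arg a + m * x) * cos (Arg b + n * x) < 0"
    for x :: real
  proof -
    have "Re (a * cis x ^ m) * Re (b * cis x ^ n)
      = (cmod a * cmod b) * (cos (Arg a + m * x) * cos (Arg b + n * x))"
      unfolding Re_mult_cis_power by (simp add: algebra_simps)
    moreover have "cmod a * cmod b > 0" using assms(5,6) by simp
    ultimately show ?thesis by (simp add: mult_less_0_iff)
  qed
  then show ?thesis
    using card_cos_product_neg_ge[OF assms(1-4)] by simp
qed

lemma double_counting_ex_row:
  fixes P :: "nat \<Rightarrow> 'a \<Rightarrow> bool"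
  assumes "finite C" and "N > 0" and "\<And>l. l \<in> C \<Longrightarrow> real N \<le> c * real (card {r\<in>{..<N}. P r l})"
  shows "\<exists>r<N. real (card C) \<le> c * real (card {l\<in>C. P r l})"
proof (rule ccontr)
  assume "\<not> ?thesis"
  then have less: "c * real (card {l\<in>C. P r l}) < real (card C)" if "r < N" for r
    using that by auto
  have count: "real (card {x\<in>A. Q x}) = (\<Sum>x\<in>A. if Q x then 1 else 0)"
    if "finite A" for A and Q :: "'b \<Rightarrow> bool"
    using that by (simp add: sum.If_cases Int_def conj_commute)
  have "real N * real (card C) = (\<Sum>l\<in>C. real N)" by simp
  also have "\<dots> \<le> (\<Sum>l\<in>C. c * real (card {r\<in>{..<N}. P r l}))"
    using assms(3) by (rule sum_mono)
  also have "\<dots> = c * (\<Sum>l\<in>C. \<Sum>r<N. if P r l then 1 else 0)"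
    by (simp only: count[OF finite_lessThan] sum_distrib_left)
  also have "\<dots> = c * (\<Sum>r<N. \<Sum>l\<in>C. if P r l then 1 else 0)"
    by (simp only: sum.swap[of _ C])
  also have "\<dots> = (\<Sum>r<N. c * real (card {l\<in>C. P r l}))"
    by (simp only: count[OF assms(1)] sum_distrib_left)
  also have "\<dots> < (\<Sum>r<N. real (card C))"
    using assms(2) less by (intro sum_strict_mono) auto
  finally show False by simp
qed

lemma ex_root_of_unity_alternating:
  fixes C :: "'a set" and a b :: "'a \<Rightarrow> complex" and m n :: "'a \<Rightarrow> nat" and J :: nat
  assumes "finite C"
    and "\<And>l. l \<in> C \<Longrightarrow> a l \<noteq> 0 \<and> b l \<noteq> 0 \<and> 1 \<le> m l \<and> 1 \<le> n l \<and> m l \<noteq> n l \<and> m l \<le> J \<and> n l \<le> J"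
  shows "\<exists>\<omega>. \<omega> \<noteq> 0 \<and> real (card C) \<le> 8 * real (card {l\<in>C.
    Re (a l * \<omega> ^ m l) * Re (b l * \<omega> ^ n l) < 0})"
proof -
  define N where "N = 4 * J + 1"
  define \<omega> where "\<omega> r = cis (2 * pi * real r / N)" for r :: nat
  have "real N \<le> 8 * real (card {r\<in>{..<N}. Re (a l * \<omega> r ^ m l) * Re (b l * \<omega> r ^ n l) < 0})"
    if "l \<in> C" for l
    using card_Re_product_neg_ge[of "m l" "n l" N "a l" "b l"] assms(2)[OF that]
    by (simp add: N_def \<omega>_def)
  then have "\<exists>r<N. real (card C) \<le> 8 * real (card {l\<in>C.
    Re (a l * \<omega> r ^ m l) * Re (b l * \<omega> r ^ n l) < 0})"
    by (intro double_counting_ex_row[OF assms(1)]) (auto simp: N_def)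
  then obtain r where "real (card C) \<le> 8 * real (card {l\<in>C.
    Re (a l * \<omega> r ^ m l) * Re (b l * \<omega> r ^ n l) < 0})"
    by blast
  moreover have "\<omega> r \<noteq> 0" by (simp add: \<omega>_def)
  ultimately show ?thesis by blast
qed

context
  fixes m :: nat and j :: "nat \<Rightarrow> nat" and \<sigma> :: "nat \<Rightarrow> real"
  assumes mono: "strict_mono_on {..<m} \<sigma>"
    and repeat_sign: "\<And>l l'. l < l' \<Longrightarrow> l' < m \<Longrightarrow> j l = j l' \<Longrightarrow> \<sigma> l < 0 \<and> 0 < \<sigma> l'"
begin

lemma card_level_set_le_2: "card {l. l < m \<and> j l = v} \<le> 2"
proof (cases "{l. l < m \<and> j l = v} = {}")
  case False
  define L where "L = {l. l < m \<and> j l = v}"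
  have fin: "finite L" by (simp add: L_def)
  have "L \<subseteq> {Min L, Max L}"
  proof
    fix l assume l: "l \<in> L"
    show "l \<in> {Min L, Max L}"
    proof (rule ccontr)
      assume "l \<notin> {Min L, Max L}"
      then have "Min L < l" "l < Max L" using Min_le[OF fin l] Max_ge[OF fin l] by auto
      moreover have "Min L \<in> L" "Max L \<in> L"
        using Min_in[OF fin] Max_in[OF fin] False by (simp_all add: L_def)
      ultimately have "0 < \<sigma> l" "\<sigma> l < 0"
        using repeat_sign[of "Min L" l] repeat_sign[of l "Max L"] l by (auto simp: L_def)
      then show False by simp
    qed
  qed
  then have "card L \<le> card {Min L, Max L}" by (rule card_mono[rotated]) simp
  also have "\<dots> \<le> 2" by (simp add: card_insert_if)
  finally show ?thesis by (simp add: L_def)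
next
  case True
  show ?thesis unfolding True by simp
qed

lemma card_adjacent_repeats_le_1: "card {l. Suc l < m \<and> j l = j (Suc l)} \<le> 1"
proof -
  define B where "B = {l. Suc l < m \<and> j l = j (Suc l)}"
  have "l' \<le> l" if "l \<in> B" "l' \<in> B" for l l'
  proof (rule ccontr)
    assume "\<not> l' \<le> l"
    then have "\<sigma> (Suc l) \<le> \<sigma> l'"
      using mono that(2) by (cases "Suc l = l'") (auto simp: B_def strict_mono_on_def less_imp_le)
    moreover have "0 < \<sigma> (Suc l)" "\<sigma> l' < 0"
      using repeat_sign[of l "Suc l"] repeat_sign[of l' "Suc l'"] that by (auto simp: B_def)
    ultimately show False by simp
  qed
  then have "\<forall>l\<in>B. \<forall>l'\<in>B. l = l'" by (meson antisym)
  moreover have "finite B" by (rule finite_subset[of _ "{..<m}"]) (auto simp: B_def)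
  ultimately have "card B \<le> Suc 0" by (simp only: card_le_Suc0_iff_eq)
  then show ?thesis by (simp add: B_def)
qed

lemma card_adjacent_distinct_nonzero_ge:
  "real m - 6 \<le> real (card {l. Suc l < m \<and> j l \<noteq> 0 \<and> j (Suc l) \<noteq> 0 \<and> j l \<noteq> j (Suc l)})"
proof -
  define C where "C = {l. Suc l < m \<and> j l \<noteq> 0 \<and> j (Suc l) \<noteq> 0 \<and> j l \<noteq> j (Suc l)}"
  define Z where "Z = {l. l < m \<and> j l = 0}"
  define Z' where "Z' = {l. Suc l < m \<and> j (Suc l) = 0}"
  define B where "B = {l. Suc l < m \<and> j l = j (Suc l)}"
  have "card Z' \<le> card Z"
    by (rule card_inj_on_le[of Suc]) (auto simp: Z'_def Z_def)
  moreover have "card Z \<le> 2" unfolding Z_def by (rule card_level_set_le_2)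
  moreover have "card B \<le> 1" unfolding B_def by (rule card_adjacent_repeats_le_1)
  moreover have "m - 1 \<le> card (C \<union> B \<union> Z \<union> Z')"
  proof -
    have sub: "{..<m - 1} \<subseteq> C \<union> B \<union> Z \<union> Z'"
      by (auto simp: C_def B_def Z_def Z'_def)
    have fin: "finite (C \<union> B \<union> Z \<union> Z')"
      by (rule finite_subset[of _ "{..<m}"]) (auto simp: C_def B_def Z_def Z'_def)
    show ?thesis using card_mono[OF fin sub] by simp
  qed
  moreover have "card (C \<union> B \<union> Z \<union> Z') \<le> card C + card B + card Z + card Z'"
    by (meson add_le_mono card_Un_le le_refl order_trans)
  ultimately have "m - 1 \<le> card C + 5" by linarith
  then show ?thesis unfolding C_def by linarith
qed

end

lemma card_points_in_gaps:
  fixes x :: "nat \<Rightarrow> real"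
  assumes "finite G"
    and "\<And>l. l \<in> G \<Longrightarrow> \<exists>\<rho>. x l < \<rho> \<and> \<rho> < x (Suc l) \<and> P \<rho>"
    and "\<And>l l'. l \<in> G \<Longrightarrow> l' \<in> G \<Longrightarrow> l < l' \<Longrightarrow> x (Suc l) \<le> x l'"
  shows "\<exists>R. finite R \<and> card R = card G \<and> (\<forall>\<rho>\<in>R. P \<rho>)"
proof -
  have "\<forall>l\<in>G. \<exists>\<rho>. x l < \<rho> \<and> \<rho> < x (Suc l) \<and> P \<rho>"
    using assms(2) by blast
  then obtain \<rho> where \<rho>: "\<forall>l\<in>G. x l < \<rho> l \<and> \<rho> l < x (Suc l) \<and> P (\<rho> l)"
    by (rule bchoice[elim_format]) blast
  have "\<rho> l < \<rho> l'" if "l \<in> G" "l' \<in> G" "l < l'" for l l'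
    using \<rho>[rule_format, OF that(1)] \<rho>[rule_format, OF that(2)] assms(3)[OF that] by linarith
  then have "inj_on \<rho> G"
    by (intro linorder_inj_onI') (metis order_less_irrefl)
  then show ?thesis
    using assms(1) \<rho> by (intro exI[of _ "\<rho> ` G"]) (auto simp: card_image)
qed

lemma mult_neg_of_opposite_weights:
  fixes x y a b :: real
  assumes "0 < x * a" and "0 < y * b" and "a * b < 0"
  shows "x * y < 0"
  using assms by (auto simp: zero_less_mult_iff mult_less_0_iff)

lemma eventually_sign_of_dominant_term:
  fixes c e :: "'a \<Rightarrow> real"
  assumes "finite S" and "p \<in> S" and "c p \<noteq> 0" and "\<And>q. q \<in> S \<Longrightarrow> q \<noteq> p \<Longrightarrow> e q < e p"
  shows "\<forall>\<^sub>F T in at_top. (\<Sum>q\<in>S. c q * T powr e q) * c p > 0"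
proof -
  define h where "h T = c p + (\<Sum>q\<in>S-{p}. c q * T powr (e q - e p))" for T
  have "(h \<longlongrightarrow> c p + 0) at_top"
    unfolding h_def using assms(4)
    by (intro tendsto_add tendsto_const tendsto_null_sum tendsto_mult_right_zero
      tendsto_neg_powr filterlim_ident) auto
  then have "((\<lambda>T. h T * c p) \<longlongrightarrow> c p * c p) at_top"
    by (simp add: tendsto_mult_right)
  moreover have "c p * c p > 0" by (metis assms(3) not_real_square_gt_zero)
  ultimately have "\<forall>\<^sub>F T in at_top. h T * c p > 0"
    by (rule order_tendstoD(1))
  moreover have "\<forall>\<^sub>F T in at_top. (0::real) < T" by (rule eventually_gt_at_top)
  ultimately show ?thesis
  proof eventually_elim
    case (elim T)
    have "(\<Sum>q\<in>S. c q * T powr e q) = T powr e p * h T"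
      using assms(1,2) elim(2)
      by (simp add: h_def sum.remove distrib_left sum_distrib_left powr_diff algebra_simps)
    then show ?case using elim by (simp add: mult.assoc)
  qed
qed

lemma poly_re_poly: "poly (re_poly g) x = Re (poly g (of_real x))"
  unfolding re_poly_def by (induction g rule: pCons_induct) (simp_all add: map_poly_pCons)

lemma poly_re_poly_specialize_y:
  assumes "finite (bsupp f)"
  shows "poly (re_poly (specialize_y f a)) x = (\<Sum>q\<in>bsupp f. Re (f q * a ^ snd q) * x ^ fst q)"
proof -
  have "poly (specialize_y f a) (of_real x) = (\<Sum>q\<in>bsupp f. f q * a ^ snd q * of_real x ^ fst q)"
    unfolding specialize_y_def poly_sum by (intro sum.cong) (auto simp: poly_monom)
  then show ?thesis unfolding poly_re_poly by (simp flip: of_real_power)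
qed

text \<open>Substituting \<open>x = T powr s\<close> and \<open>y = T powr \<epsilon> * \<omega>\<close>, the monomial \<open>x^i y^j\<close> has size
  of order \<open>T powr (\<epsilon> j + s i)\<close>; a weight-dominant exponent \<open>p\<close> is the unique largest one.\<close>

definition weight_dominant :: "(nat \<times> nat) set \<Rightarrow> real \<Rightarrow> real \<Rightarrow> nat \<times> nat \<Rightarrow> bool" where
  "weight_dominant S \<epsilon> s p \<longleftrightarrow>
     (\<forall>q\<in>S. q \<noteq> p \<longrightarrow> \<epsilon> * real (snd q) + s * real (fst q) < \<epsilon> * real (snd p) + s * real (fst p))"

lemma eventually_sign_specialize_y:
  assumes "finite (bsupp f)" and "p \<in> bsupp f" and "weight_dominant (bsupp f) \<epsilon> s p"
    and "Re (f p * \<omega> ^ snd p) \<noteq> 0"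
  shows "\<forall>\<^sub>F T in at_top.
    poly (re_poly (specialize_y f (of_real (T powr \<epsilon>) * \<omega>))) (T powr s) * Re (f p * \<omega> ^ snd p) > 0"
proof -
  define e where "e q = \<epsilon> * real (snd q) + s * real (fst q)" for q :: "nat \<times> nat"
  have "\<forall>\<^sub>F T in at_top. (\<Sum>q\<in>bsupp f. Re (f q * \<omega> ^ snd q) * T powr e q) * Re (f p * \<omega> ^ snd p) > 0"
    using assms by (intro eventually_sign_of_dominant_term) (auto simp: weight_dominant_def e_def)
  moreover have "\<forall>\<^sub>F T in at_top. (0::real) < T" by (rule eventually_gt_at_top)
  ultimately show ?thesis
  proof eventually_elim
    case (elim T)
    have "Re (f q * (of_real (T powr \<epsilon>) * \<omega>) ^ snd q) * (T powr s) ^ fst q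
        = Re (f q * \<omega> ^ snd q) * T powr e q" for q
    proof -
      have "Re (f q * (of_real (T powr \<epsilon>) * \<omega>) ^ snd q) = (T powr \<epsilon>) ^ snd q * Re (f q * \<omega> ^ snd q)"
        by (simp add: power_mult_distrib algebra_simps flip: of_real_power)
      then show ?thesis
        using elim(2) by (simp add: powr_power e_def powr_add algebra_simps)
    qed
    then show ?case using elim(1) by (simp add: poly_re_poly_specialize_y[OF assms(1)])
  qed
qed

definition dominant_exponents :: "(nat \<times> nat) set \<Rightarrow> real \<Rightarrow> (nat \<times> nat) set" where
  "dominant_exponents S \<epsilon> = {p\<in>S. \<exists>s. weight_dominant S \<epsilon> s p}"

lemma weight_dominant_pair:
  assumes "weight_dominant S \<epsilon> s p" and "weight_dominant S \<epsilon> t q"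
    and "p \<in> S" and "q \<in> S" and "p \<noteq> q"
  shows "s * (real (fst q) - real (fst p)) < \<epsilon> * (real (snd p) - real (snd q))"
    and "\<epsilon> * (real (snd p) - real (snd q)) < t * (real (fst q) - real (fst p))"
  using assms by (auto simp: weight_dominant_def algebra_simps)

lemma weight_dominant_fst_eq:
  assumes "weight_dominant S \<epsilon> s p" and "weight_dominant S \<epsilon> t q" and "p \<in> S" and "q \<in> S"
    and "fst p = fst q"
  shows "p = q"
proof (rule ccontr)
  assume "p \<noteq> q"
  from weight_dominant_pair[OF assms(1-4) this] assms(5) show False by simp
qed

lemma weight_dominant_fst_less:
  assumes "weight_dominant S \<epsilon> s p" and "weight_dominant S \<epsilon> t q" and "p \<in> S" and "q \<in> S"
    and "fst p < fst q"
  shows "s < t"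
    and "snd p = snd q \<Longrightarrow> s < 0 \<and> 0 < t"
proof -
  have "p \<noteq> q" using assms(5) by auto
  note ineq = weight_dominant_pair[OF assms(1-4) this]
  have d: "real (fst q) - real (fst p) > 0" using assms(5) by simp
  have "s * (real (fst q) - real (fst p)) < t * (real (fst q) - real (fst p))"
    using ineq by linarith
  then show "s < t"
    using d by (simp add: mult_less_cancel_right)
  show "s < 0 \<and> 0 < t" if "snd p = snd q"
    using ineq d that by (simp add: mult_less_0_iff zero_less_mult_iff)
qed

lemma dominant_exponents_chain:
  assumes "finite S"
  obtains w :: "nat \<Rightarrow> nat \<times> nat" and \<sigma> :: "nat \<Rightarrow> real"
  where "\<And>l. l < card (dominant_exponents S \<epsilon>) \<Longrightarrow> w l \<in> S \<and> weight_dominant S \<epsilon> (\<sigma> l) (w l)"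
    and "strict_mono_on {..<card (dominant_exponents S \<epsilon>)} \<sigma>"
    and "\<And>l l'. l < l' \<Longrightarrow> l' < card (dominant_exponents S \<epsilon>) \<Longrightarrow> snd (w l) = snd (w l') \<Longrightarrow>
           \<sigma> l < 0 \<and> 0 < \<sigma> l'"
proof -
  define U where "U = dominant_exponents S \<epsilon>"
  define sl where "sl p = (SOME s. weight_dominant S \<epsilon> s p)" for p
  have U: "p \<in> S \<and> weight_dominant S \<epsilon> (sl p) p" if "p \<in> U" for p
    using that unfolding U_def dominant_exponents_def sl_def by (auto intro: someI_ex)
  have fin: "finite U" using assms by (simp add: U_def dominant_exponents_def)
  note dom = U[THEN conjunct2] U[THEN conjunct2] U[THEN conjunct1] U[THEN conjunct1]
  have "inj_on fst U"
    by (rule inj_onI) (rule weight_dominant_fst_eq[OF dom])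
  then have card_fst: "card (fst ` U) = card U" by (rule card_image)
  obtain h where h: "bij_betw h {..<card U} (fst ` U)" and h_mono: "strict_mono_on {..<card U} h"
    using ex_bij_betw_strict_mono_card[of "fst ` U"] fin card_fst by auto
  note fst_less_slope = weight_dominant_fst_less[OF dom]
  define w where "w l = inv_into U fst (h l)" for l
  have w: "w l \<in> U" "fst (w l) = h l" if "l < card U" for l
  proof -
    have "h l \<in> fst ` U" using that h by (auto simp: bij_betw_def)
    then show "w l \<in> U" "fst (w l) = h l"
      unfolding w_def by (auto intro: inv_into_into f_inv_into_f)
  qed
  have fst_less: "fst (w l) < fst (w l')" if "l < l'" "l' < card U" for l l'
    using that w h_mono by (simp add: strict_mono_on_def)
  show thesis
  proof (rule that[of w "sl \<circ> w", folded U_def])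
    show "w l \<in> S \<and> weight_dominant S \<epsilon> ((sl \<circ> w) l) (w l)" if "l < card U" for l
      using U w(1) that by simp
    show "strict_mono_on {..<card U} (sl \<circ> w)"
    proof (rule strict_mono_onI)
      fix l l' assume "l \<in> {..<card U}" "l' \<in> {..<card U}" "l < l'"
      then show "(sl \<circ> w) l < (sl \<circ> w) l'"
        using fst_less_slope(1) fst_less[of l l'] w(1)[of l] w(1)[of l'] by simp
    qed
    show "(sl \<circ> w) l < 0 \<and> 0 < (sl \<circ> w) l'"
      if "l < l'" "l' < card U" "snd (w l) = snd (w l')" for l l'
      using fst_less_slope(2) fst_less[OF that(1,2)] w(1)[of l] w(1)[of l'] that by simp
  qed
qed

lemma extreme_point_strict_linear_max:
  fixes T :: "'a::euclidean_space set"
  assumes "finite T" and "v extreme_point_of convex hull T"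
  obtains a where "\<And>q. q \<in> T \<Longrightarrow> q \<noteq> v \<Longrightarrow> a \<bullet> q < a \<bullet> v"
proof -
  have "{v} exposed_face_of convex hull T"
    using assms by (simp add: face_of_singleton exposed_face_of_polyhedron polyhedron_convex_hull)
  then obtain a b where le: "convex hull T \<subseteq> {x. a \<bullet> x \<le> b}"
    and eq: "{v} = convex hull T \<inter> {x. a \<bullet> x = b}"
    unfolding exposed_face_of_def by blast
  show thesis
  proof (rule that)
    fix q assume "q \<in> T" "q \<noteq> v"
    then have "q \<in> convex hull T" "q \<notin> {v}" by (auto intro: hull_inc)
    then have "a \<bullet> q \<le> b" "a \<bullet> q \<noteq> b" using le eq by auto
    moreover have "a \<bullet> v = b" using eq by blast
    ultimately show "a \<bullet> q < a \<bullet> v" by simp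
  qed
qed

lemma eventually_strict_linear_max_perturbed:
  fixes a d :: "'a::real_inner"
  assumes "finite T" and "\<And>q. q \<in> T \<Longrightarrow> q \<noteq> v \<Longrightarrow> a \<bullet> q < a \<bullet> v"
  shows "\<forall>\<^sub>F \<eta> in at_right 0. \<forall>q\<in>T - {v}. (a + \<eta> *\<^sub>R d) \<bullet> q < (a + \<eta> *\<^sub>R d) \<bullet> v"
proof (rule eventually_ball_finite)
  show "finite (T - {v})" using assms(1) by simp
  show "\<forall>q\<in>T - {v}. \<forall>\<^sub>F \<eta> in at_right 0. (a + \<eta> *\<^sub>R d) \<bullet> q < (a + \<eta> *\<^sub>R d) \<bullet> v"
  proof
    fix q assume "q \<in> T - {v}"
    have "((\<lambda>\<eta>. (a + \<eta> *\<^sub>R d) \<bullet> (v - q)) \<longlongrightarrow> (a + 0 *\<^sub>R d) \<bullet> (v - q)) (at_right 0)"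
      by (intro tendsto_intros)
    moreover have "(a + 0 *\<^sub>R d) \<bullet> (v - q) > 0"
      using assms(2) \<open>q \<in> T - {v}\<close> by (simp add: inner_diff_right)
    ultimately have "\<forall>\<^sub>F \<eta> in at_right 0. (a + \<eta> *\<^sub>R d) \<bullet> (v - q) > 0"
      by (rule order_tendstoD(1))
    then show "\<forall>\<^sub>F \<eta> in at_right 0. (a + \<eta> *\<^sub>R d) \<bullet> q < (a + \<eta> *\<^sub>R d) \<bullet> v"
      by (simp add: inner_diff_right)
  qed
qed

text \<open>A functional ignoring the second coordinate is first tilted slightly, which keeps the finitely
  many strict inequalities; then it is rescaled so that its second coefficient is \<open>\<plusminus>1\<close>.\<close>

lemma strict_linear_max_normalized:
  fixes T :: "(real \<times> real) set"
  assumes "finite T" and "\<And>q. q \<in> T \<Longrightarrow> q \<noteq> v \<Longrightarrow> a \<bullet> q < a \<bullet> v"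
  obtains \<epsilon> s where "\<epsilon> = 1 \<or> \<epsilon> = -1"
    and "\<And>q. q \<in> T \<Longrightarrow> q \<noteq> v \<Longrightarrow> \<epsilon> * snd q + s * fst q < \<epsilon> * snd v + s * fst v"
proof -
  obtain b where b: "snd b \<noteq> 0" and max: "\<And>q. q \<in> T \<Longrightarrow> q \<noteq> v \<Longrightarrow> b \<bullet> q < b \<bullet> v"
  proof (cases "snd a = 0")
    case True
    have "\<forall>\<^sub>F \<eta> in at_right (0::real). 0 < \<eta> \<and>
      (\<forall>q\<in>T - {v}. (a + \<eta> *\<^sub>R (0, 1)) \<bullet> q < (a + \<eta> *\<^sub>R (0, 1)) \<bullet> v)"
      using eventually_at_right_less eventually_strict_linear_max_perturbed[OF assms]
      by (rule eventually_conj)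
    then obtain \<eta> :: real where "0 < \<eta>"
      "\<forall>q\<in>T - {v}. (a + \<eta> *\<^sub>R (0, 1)) \<bullet> q < (a + \<eta> *\<^sub>R (0, 1)) \<bullet> v"
      using eventually_happens'[OF trivial_limit_at_right_real] by blast
    then show thesis using True by (intro that[of "a + \<eta> *\<^sub>R (0, 1)"]) auto
  qed (use assms(2) in blast)
  have "b \<bullet> q = \<bar>snd b\<bar> * (sgn (snd b) * snd q + fst b / \<bar>snd b\<bar> * fst q)" for q :: "real \<times> real"
    using b by (cases b, cases q) (simp add: inner_prod_def field_simps sgn_if)
  then show thesis
    using b max by (intro that[of "sgn (snd b)" "fst b / \<bar>snd b\<bar>"]) (auto simp: sgn_if)
qed

lemma newton_vertex_dominant:
  assumes "finite (bsupp f)" and "v \<in> newton_vertices f"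
  obtains p \<epsilon> where "\<epsilon> = 1 \<or> \<epsilon> = -1" and "p \<in> dominant_exponents (bsupp f) \<epsilon>"
    and "v = (real (fst p), real (snd p))"
proof -
  define \<phi> :: "nat \<times> nat \<Rightarrow> real \<times> real" where "\<phi> p = (real (fst p), real (snd p))" for p
  have hull: "newton_polytope f = convex hull (\<phi> ` bsupp f)"
    unfolding newton_polytope_def \<phi>_def by (simp add: case_prod_beta)
  have fin: "finite (\<phi> ` bsupp f)" using assms(1) by simp
  have ext: "v extreme_point_of convex hull (\<phi> ` bsupp f)"
    using assms(2) hull by (simp add: newton_vertices_def)
  then obtain p where p: "p \<in> bsupp f" "v = \<phi> p"
    using extreme_point_of_convex_hull by blast
  obtain a where "\<And>q. q \<in> \<phi> ` bsupp f \<Longrightarrow> q \<noteq> v \<Longrightarrow> a \<bullet> q < a \<bullet> v"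
    using extreme_point_strict_linear_max[OF fin ext] by blast
  then obtain \<epsilon> s where \<epsilon>: "\<epsilon> = 1 \<or> \<epsilon> = -1"
    and max: "\<And>q. q \<in> \<phi> ` bsupp f \<Longrightarrow> q \<noteq> v \<Longrightarrow> \<epsilon> * snd q + s * fst q < \<epsilon> * snd v + s * fst v"
    using strict_linear_max_normalized[OF fin] by blast
  have "\<phi> q \<noteq> v" if "q \<noteq> p" for q
    using that p(2) by (auto simp: \<phi>_def prod_eq_iff)
  then have "weight_dominant (bsupp f) \<epsilon> s p"
    unfolding weight_dominant_def using max p(2) by (force simp: \<phi>_def)
  then have "p \<in> dominant_exponents (bsupp f) \<epsilon>"
    using p(1) by (auto simp: dominant_exponents_def)
  then show thesis using that \<epsilon> p(2) by (simp add: \<phi>_def)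
qed

lemma newton_vertices_le_twice_dominant:
  assumes "finite (bsupp f)"
  obtains \<epsilon> :: real where "card (newton_vertices f) \<le> 2 * card (dominant_exponents (bsupp f) \<epsilon>)"
proof -
  define D where "D = dominant_exponents (bsupp f) 1 \<union> dominant_exponents (bsupp f) (-1)"
  have fin: "finite D" using assms by (simp add: D_def dominant_exponents_def)
  have "newton_vertices f \<subseteq> (\<lambda>p. (real (fst p), real (snd p))) ` D"
    using newton_vertex_dominant[OF assms] unfolding D_def by blast
  then have "card (newton_vertices f) \<le> card ((\<lambda>p. (real (fst p), real (snd p))) ` D)"
    using fin by (intro card_mono) auto
  also have "\<dots> \<le> card D" using fin by (rule card_image_le)
  also have "\<dots> \<le> card (dominant_exponents (bsupp f) 1) + card (dominant_exponents (bsupp f) (-1))"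
    unfolding D_def by (rule card_Un_le)
  finally show thesis
    using that[of 1] that[of "-1"] by linarith
qed

text \<open>For large \<open>T\<close> the value at \<open>T powr \<sigma> l\<close> has the sign of the dominant term, so the signs
  alternate along each pair \<open>l, Suc l\<close> with \<open>l \<in> G\<close>, and the gaps are disjoint.\<close>

lemma roots_from_alternating_dominant_terms:
  fixes w :: "nat \<Rightarrow> nat \<times> nat" and \<sigma> :: "nat \<Rightarrow> real" and G :: "nat set"
  assumes fin: "finite (bsupp f)" "finite G"
    and dom: "\<And>l. l \<in> G \<union> Suc ` G \<Longrightarrow> w l \<in> bsupp f \<and> weight_dominant (bsupp f) \<epsilon> (\<sigma> l) (w l)"
    and mono: "\<And>l l'. l \<in> G \<union> Suc ` G \<Longrightarrow> l' \<in> G \<union> Suc ` G \<Longrightarrow> l < l' \<Longrightarrow> \<sigma> l < \<sigma> l'"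
    and alt: "\<And>l. l \<in> G \<Longrightarrow> Re (f (w l) * \<omega> ^ snd (w l)) *
        Re (f (w (Suc l)) * \<omega> ^ snd (w (Suc l))) < 0"
    and "\<omega> \<noteq> 0"
  shows "\<exists>a. a \<noteq> 0 \<and> (\<exists>R. finite R \<and> card R = card G \<and>
    (\<forall>x\<in>R. poly (re_poly (specialize_y f a)) x = 0))"
proof -
  define c where "c l = Re (f (w l) * \<omega> ^ snd (w l))" for l
  define P where "P T = re_poly (specialize_y f (of_real (T powr \<epsilon>) * \<omega>))" for T
  have alt_c: "c l * c (Suc l) < 0" if "l \<in> G" for l
    unfolding c_def using that by (rule alt)
  have "\<forall>\<^sub>F T in at_top. \<forall>l\<in>G \<union> Suc ` G. poly (P T) (T powr \<sigma> l) * c l > 0"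
  proof (rule eventually_ball_finite, use fin(2) in simp, rule ballI)
    fix l assume l: "l \<in> G \<union> Suc ` G"
    then have "c l \<noteq> 0"
      using alt_c[of l] alt_c[of "l - 1"] by (cases l) auto
    then have "Re (f (w l) * \<omega> ^ snd (w l)) \<noteq> 0" by (simp only: c_def not_False_eq_True)
    from eventually_sign_specialize_y[OF fin(1) dom[OF l, THEN conjunct1]
      dom[OF l, THEN conjunct2] this]
    show "\<forall>\<^sub>F T in at_top. poly (P T) (T powr \<sigma> l) * c l > 0"
      by (simp only: P_def c_def)
  qed
  with eventually_gt_at_top[of 1]
  have "\<forall>\<^sub>F T in at_top. 1 < T \<and> (\<forall>l\<in>G \<union> Suc ` G. poly (P T) (T powr \<sigma> l) * c l > 0)"
    by (rule eventually_conj)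
  then have "\<exists>T. 1 < T \<and> (\<forall>l\<in>G \<union> Suc ` G. poly (P T) (T powr \<sigma> l) * c l > 0)"
    by (rule eventually_happens'[OF trivial_limit_at_top_linorder])
  then obtain T where T: "1 < T" and sign: "\<And>l. l \<in> G \<union> Suc ` G \<Longrightarrow> poly (P T) (T powr \<sigma> l) * c l > 0"
    by blast
  have roots: "\<exists>\<rho>. T powr \<sigma> l < \<rho> \<and> \<rho> < T powr \<sigma> (Suc l) \<and> poly (P T) \<rho> = 0" if "l \<in> G" for l
  proof -
    have less: "T powr \<sigma> l < T powr \<sigma> (Suc l)" using mono[of l "Suc l"] that T by simp
    have "0 < poly (P T) (T powr \<sigma> l) * c l" "0 < poly (P T) (T powr \<sigma> (Suc l)) * c (Suc l)"
      using sign that by auto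
    then have "poly (P T) (T powr \<sigma> l) * poly (P T) (T powr \<sigma> (Suc l)) < 0"
      using alt_c[OF that] by (rule mult_neg_of_opposite_weights)
    with less show ?thesis by (rule poly_IVT)
  qed
  have gaps: "T powr \<sigma> (Suc l) \<le> T powr \<sigma> l'" if "l \<in> G" "l' \<in> G" "l < l'" for l l'
  proof -
    have "\<sigma> (Suc l) \<le> \<sigma> l'"
      using mono[of "Suc l" l'] that by (cases "Suc l = l'") auto
    then show ?thesis using T by (intro powr_mono) auto
  qed
  obtain R where "finite R" "card R = card G" "\<forall>x\<in>R. poly (P T) x = 0"
    using card_points_in_gaps[OF fin(2), where x = "\<lambda>l. T powr \<sigma> l" and P = "\<lambda>x. poly (P T) x = 0"]
      roots gaps by blast
  moreover have "of_real (T powr \<epsilon>) * \<omega> \<noteq> 0" using T \<open>\<omega> \<noteq> 0\<close> by simp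
  ultimately show ?thesis unfolding P_def by blast
qed

lemma real_roots_from_dominant_exponents:
  assumes fin: "finite (bsupp f)"
  shows "\<exists>a. a \<noteq> 0 \<and> (\<exists>R. finite R \<and> real (card (dominant_exponents (bsupp f) \<epsilon>)) - 6
    \<le> 8 * real (card R)
           \<and> (\<forall>x\<in>R. poly (re_poly (specialize_y f a)) x = 0))"
proof -
  define m where "m = card (dominant_exponents (bsupp f) \<epsilon>)"
  obtain w \<sigma> where dom: "\<And>l. l < m \<Longrightarrow> w l \<in> bsupp f \<and> weight_dominant (bsupp f) \<epsilon> (\<sigma> l) (w l)"
    and mono: "strict_mono_on {..<m} \<sigma>"
    and repeat: "\<And>l l'. l < l' \<Longrightarrow> l' < m \<Longrightarrow> snd (w l) = snd (w l') \<Longrightarrow> \<sigma> l < 0 \<and> 0 < \<sigma> l'"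
    using dominant_exponents_chain[OF fin, of \<epsilon>, folded m_def] by blast
  define C where "C = {l. Suc l < m \<and> snd (w l) \<noteq> 0 \<and> snd (w (Suc l)) \<noteq> 0 \<and>
    snd (w l) \<noteq> snd (w (Suc l))}"
  have C_large: "real m - 6 \<le> real (card C)"
    unfolding C_def
      by (rule card_adjacent_distinct_nonzero_ge[of m \<sigma> "\<lambda>l. snd (w l)", OF mono repeat])
  have fin_C: "finite C" by (rule finite_subset[of _ "{..<m}"]) (auto simp: C_def)
  have "f (w l) \<noteq> 0 \<and> f (w (Suc l)) \<noteq> 0 \<and> 1 \<le> snd (w l) \<and> 1 \<le> snd (w (Suc l)) \<and>
      snd (w l) \<noteq> snd (w (Suc l)) \<and> snd (w l) \<le> Max (snd ` bsupp f) \<and>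
      snd (w (Suc l)) \<le> Max (snd ` bsupp f)"
    if "l \<in> C" for l
  proof -
    have "w l \<in> bsupp f" "w (Suc l) \<in> bsupp f" using that dom by (auto simp: C_def)
    then show ?thesis using that fin by (auto simp: C_def bsupp_def intro: Max_ge)
  qed
  from ex_root_of_unity_alternating[of C "\<lambda>l. f (w l)" "\<lambda>l. f (w (Suc l))" "\<lambda>l. snd (w l)"
      "\<lambda>l. snd (w (Suc l))", OF fin_C this]
  obtain \<omega> where "\<omega> \<noteq> 0" and many_alternations: "real (card C) \<le> 8 * real (card {l\<in>C.
      Re (f (w l) * \<omega> ^ snd (w l)) * Re (f (w (Suc l)) * \<omega> ^ snd (w (Suc l))) < 0})"
    by blast
  define G where "G = {l\<in>C. Re (f (w l) * \<omega> ^ snd (w l)) *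
      Re (f (w (Suc l)) * \<omega> ^ snd (w (Suc l))) < 0}"
  have "\<exists>a. a \<noteq> 0 \<and> (\<exists>R. finite R \<and> card R = card G \<and>
    (\<forall>x\<in>R. poly (re_poly (specialize_y f a)) x = 0))"
  proof (rule roots_from_alternating_dominant_terms[OF fin])
    show "finite G" using fin_C by (simp add: G_def)
    show "w l \<in> bsupp f \<and> weight_dominant (bsupp f) \<epsilon> (\<sigma> l) (w l)" if "l \<in> G \<union> Suc ` G" for l
      using that dom by (auto simp: G_def C_def)
    show "\<sigma> l < \<sigma> l'" if "l \<in> G \<union> Suc ` G" "l' \<in> G \<union> Suc ` G" "l < l'" for l l'
      using that mono by (auto simp: G_def C_def strict_mono_on_def)
    show "Re (f (w l) * \<omega> ^ snd (w l)) * Re (f (w (Suc l)) * \<omega> ^ snd (w (Suc l))) < 0"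
      if "l \<in> G" for l
      using that by (simp add: G_def)
  qed fact
  then obtain a R where "a \<noteq> 0" "finite R" "card R = card G"
    "\<forall>x\<in>R. poly (re_poly (specialize_y f a)) x = 0"
    by blast
  moreover have "real m - 6 \<le> 8 * real (card R)"
    using C_large many_alternations \<open>card R = card G\<close> unfolding G_def by linarith
  ultimately show ?thesis unfolding m_def by blast
qed

theorem theorem2p3:
  shows "\<exists>c::real. c > 0 \<and> (\<exists>k0::nat. \<forall>k\<ge>k0. \<forall>f :: nat \<times> nat \<Rightarrow> complex.
           finite (bsupp f) \<and> card (newton_vertices f) = k \<longrightarrow>
           (\<exists>a::complex. a \<noteq> 0 \<and>
              (\<exists>S :: real set. finite S \<and> c * real k \<le> real (card S) \<and>
                 (\<forall>x\<in>S. poly (re_poly (specialize_y f a)) x = 0))))"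
proof (intro exI[of _ "1/32 :: real"] conjI exI[of _ "24 :: nat"] allI impI)
  fix k :: nat and f :: "nat \<times> nat \<Rightarrow> complex"
  assume "24 \<le> k" and f: "finite (bsupp f) \<and> card (newton_vertices f) = k"
  obtain \<epsilon> where "card (newton_vertices f) \<le> 2 * card (dominant_exponents (bsupp f) \<epsilon>)"
    using newton_vertices_le_twice_dominant f by blast
  then have "real k \<le> 2 * real (card (dominant_exponents (bsupp f) \<epsilon>))"
    using f of_nat_le_iff[of k "2 * card (dominant_exponents (bsupp f) \<epsilon>)", where 'a = real] by simp
  moreover obtain a R where "a \<noteq> 0" "finite R" "\<forall>x\<in>R. poly (re_poly (specialize_y f a)) x = 0"
    and "real (card (dominant_exponents (bsupp f) \<epsilon>)) - 6 \<le> 8 * real (card R)"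
    using real_roots_from_dominant_exponents[OF f[THEN conjunct1], of \<epsilon>] by blast
  moreover have "1/32 * real k \<le> real (card R)"
    using calculation \<open>24 \<le> k\<close> by linarith
  ultimately show "\<exists>a. a \<noteq> 0 \<and> (\<exists>S. finite S \<and> 1/32 * real k \<le> real (card S) \<and>
          (\<forall>x\<in>S. poly (re_poly (specialize_y f a)) x = 0))"
    by blast
qed simp

end
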